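(* Fix $n\ge1$ and let $N\to\infty$, where $h=h(N)>0$ and $\vec J=\vec J(N)=(J_1,\dots,J_n)$ with $J_i>0$ may depend on $N$. Suppose that, for every $N$, $J_1\ge J_2\ge\dots\ge J_n$, and that assumptions (A1) and (A3) (stated in the context) hold. Then $$\Gamma^\star=\big[1+o_N(1)\big]\,\frac14\,(J_{\hat m+1})^{-1}\Big(\sum_{i=\hat m+1}^nJ_iN^i-h\Big)^2,\qquad N\to\infty .$$
   Context: Hierarchical lattice $\Lambda_N^n=\{1,\dots,N^n\}$; $k$-blocks are the sets $\{jN^k+1,\dots,(j+1)N^k\}$; $d(a,b)$ is the smallest $k\ge0$ such that $a,b$ lie in a common $k$-block. Configurations $\sigma\in\{-1,+1\}^{\Lambda_N^n}$, $\boxminus\equiv-1$, $\boxplus\equiv+1$. Hamiltonian $\mathcal H(\sigma)=-\frac12\sum_{\{v,w\},v\ne w}J_{d(v,w)}\sigma(v)\sigma(w)-\frac h2\sum_v\sigma(v)$ (sum over unordered pairs), so $\mathcal H(\sigma)-\mathcal H(\boxminus)=\sum_{v:\sigma(v)=+1,\,w:\sigma(w)=-1}J_{d(v,w)}-h\,|\{v:\sigma(v)=+1\}|$. Paths consist of single spin flips; $\Phi(\sigma,\eta)=\min_{\text{paths }\sigma\to\eta}\max_{\xi\in\text{path}}\mathcal H(\xi)$ and $\Gamma^\star=\Phi(\boxminus,\boxplus)-\mathcal H(\boxminus)$. Define $\hat m=\max\{0\le m\le n-1:(1-\frac1N)\sum_{i=m+1}^nJ_iN^i>h\}$ and $\hat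 s=\frac N2(J_{\hat m+1}N^{\hat m+1})^{-1}\big[(1-\frac1N)\sum_{i=\hat m+1}^nJ_iN^i-h\big]$. (A1): $(1-\frac1N)\sum_{i=1}^nJ_iN^i>h$. (A3): for all $1\le k\le N^{\hat m}$ with $N$-ary decomposition $k=a_{\hat m-1}N^{\hat m-1}+\dots+a_0$ ($0\le a_j\le N-1$), $$\lim_{N\to\infty}\frac{\sum_{i=0}^{\hat m-1}J_{i+1}N^i\Big[(N-a_i-1)\big(\sum_{j=0}^ia_jN^j\big)+a_i\big(N^i-\sum_{j=0}^{i-1}a_jN^j\big)\Big]+k\sum_{i=\hat m+1}^nJ_iN^i}{\lceil\hat s\rceil(2\hat s-\lceil\hat s\rceil+1)J_{\hat m+1}N^{2\hat m}}=0.$$ *)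

theory Defs
  imports "HOL-Analysis.Analysis"
begin

definition lattice :: "nat \<Rightarrow> nat \<Rightarrow> nat set" where
  "lattice N n = {1..N ^ n}"

text \<open>a and b lie in a common k-block {j N^k + 1, ..., (j+1) N^k}.\<close>
definition same_block :: "nat \<Rightarrow> nat \<Rightarrow> nat \<Rightarrow> nat \<Rightarrow> bool" where
  "same_block N k a b \<longleftrightarrow> (a - 1) div N ^ k = (b - 1) div N ^ k"

definition hdist :: "nat \<Rightarrow> nat \<Rightarrow> nat \<Rightarrow> nat" where
  "hdist N a b = (LEAST k. same_block N k a b)"

definition configs :: "nat \<Rightarrow> nat \<Rightarrow> (nat \<Rightarrow> int) set" where
  "configs N n = {\<sigma>. (\<forall>v\<in>lattice N n. \<sigma> v = 1 \<or> \<sigma> v = -1) \<and> (\<forall>v. v \<notin> lattice N n \<longrightarrow> \<sigma> v = -1)}"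

definition all_minus :: "nat \<Rightarrow> int" where
  "all_minus = (\<lambda>v. -1)"

definition all_plus :: "nat \<Rightarrow> nat \<Rightarrow> nat \<Rightarrow> int" where
  "all_plus N n = (\<lambda>v. if v \<in> lattice N n then 1 else -1)"

definition hamiltonian :: "nat \<Rightarrow> nat \<Rightarrow> (nat \<Rightarrow> real) \<Rightarrow> real \<Rightarrow> (nat \<Rightarrow> int) \<Rightarrow> real" where
  "hamiltonian N n J h \<sigma> =
     - (1/2) * (\<Sum>(v,w) \<in> {(v,w). v \<in> lattice N n \<and> w \<in> lattice N n \<and> v < w}.
                   J (hdist N v w) * of_int (\<sigma> v) * of_int (\<sigma> w))
     - (h/2) * (\<Sum>v \<in> lattice N n. of_int (\<sigma> v))"

definition flip :: "(nat \<Rightarrow> int) \<Rightarrow> nat \<Rightarrow> nat \<Rightarrow> int" where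
  "flip \<sigma> v = \<sigma>(v := - \<sigma> v)"

definition is_path :: "nat \<Rightarrow> nat \<Rightarrow> (nat \<Rightarrow> int) \<Rightarrow> (nat \<Rightarrow> int) \<Rightarrow> (nat \<Rightarrow> int) list \<Rightarrow> bool" where
  "is_path N n \<sigma> \<eta> p \<longleftrightarrow> p \<noteq> [] \<and> hd p = \<sigma> \<and> last p = \<eta> \<and> set p \<subseteq> configs N n \<and>
     (\<forall>i. Suc i < length p \<longrightarrow> (\<exists>v \<in> lattice N n. p ! Suc i = flip (p ! i) v))"

definition comm_height :: "nat \<Rightarrow> nat \<Rightarrow> (nat \<Rightarrow> real) \<Rightarrow> real \<Rightarrow> (nat \<Rightarrow> int) \<Rightarrow> (nat \<Rightarrow> int) \<Rightarrow> real" where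
  "comm_height N n J h \<sigma> \<eta> =
     (INF p \<in> {p. is_path N n \<sigma> \<eta> p}. Max (hamiltonian N n J h ` set p))"

definition Gamma_star :: "nat \<Rightarrow> nat \<Rightarrow> (nat \<Rightarrow> real) \<Rightarrow> real \<Rightarrow> real" where
  "Gamma_star N n J h =
     comm_height N n J h all_minus (all_plus N n) - hamiltonian N n J h all_minus"

definition m_hat :: "nat \<Rightarrow> nat \<Rightarrow> (nat \<Rightarrow> real) \<Rightarrow> real \<Rightarrow> nat" where
  "m_hat N n J h = Max {m. m \<le> n - 1 \<and>
      (1 - 1 / real N) * (\<Sum>i = m+1..n. J i * real N ^ i) > h}"

definition s_hat :: "nat \<Rightarrow> nat \<Rightarrow> (nat \<Rightarrow> real) \<Rightarrow> real \<Rightarrow> real" where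
  "s_hat N n J h = (let m = m_hat N n J h in
      (real N / 2) * inverse (J (m+1) * real N ^ (m+1)) *
      ((1 - 1 / real N) * (\<Sum>i = m+1..n. J i * real N ^ i) - h))"

definition digit :: "nat \<Rightarrow> nat \<Rightarrow> nat \<Rightarrow> nat" where
  "digit N k j = (k div N ^ j) mod N"

definition A3_ratio :: "nat \<Rightarrow> nat \<Rightarrow> (nat \<Rightarrow> real) \<Rightarrow> real \<Rightarrow> nat \<Rightarrow> real" where
  "A3_ratio N n J h k = (let m = m_hat N n J h; s = s_hat N n J h; a = digit N k; NN = real N in
     ((\<Sum>i<m. J (i+1) * NN ^ i *
          ((NN - real (a i) - 1) * (\<Sum>j\<le>i. real (a j) * NN ^ j)
           + real (a i) * (NN ^ i - (\<Sum>j<i. real (a j) * NN ^ j))))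
      + real k * (\<Sum>i = m+1..n. J i * NN ^ i))
     / (of_int \<lceil>s\<rceil> * (2 * s - of_int \<lceil>s\<rceil> + 1) * J (m+1) * NN ^ (2*m)))"

end

theory Submission
  imports Defs
begin

text \<open>Write \<open>p\<close> for the number of plus sites and \<open>m = m_hat\<close>. Capping the couplings of levels
  up to \<open>m + 1\<close> at \<open>J (m + 1)\<close>, every plus site interacts with the minus sites at least as much as
  a single site does with the rest of the lattice, minus \<open>J (m + 1)\<close> per other plus site; hence
  the energy is at least \<open>p (slope - J (m + 1) p)\<close>. A single-flip path passes through every
  value of \<open>p\<close>, which bounds the barrier from below by \<open>slope^2 / (4 J (m + 1)) - J (m + 1)\<close>.
  Conversely, flipping the sites in increasing order, the levels above \<open>m\<close> cost at most
  \<open>slope^2 / (4 J (m + 1))\<close> (summation by parts and the maximality of \<open>m_hat\<close>), while the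
  levels up to \<open>m\<close> cost exactly the first term of the numerator in (A3). Assumption (A3) at
  \<open>k = N^m\<close> and at the worst \<open>k\<close> makes all error terms, including the difference between
  \<open>slope\<close> and \<open>\<Sum>i>m. J i N^i - h\<close>, negligible.\<close>

section \<open>Blocks and hierarchical distance\<close>

lemma finite_lattice [simp]: "finite (lattice N n)"
  unfolding lattice_def by simp

lemma card_lattice [simp]: "card (lattice N n) = N ^ n"
  unfolding lattice_def by simp

lemma pred_div_eq_iff:
  fixes M c w :: nat
  assumes "0 < M" "1 \<le> w"
  shows "(w - 1) div M = c \<longleftrightarrow> c * M + 1 \<le> w \<and> w \<le> (c + 1) * M"
proof
  assume "(w - 1) div M = c"
  moreover have "M * ((w - 1) div M) \<le> w - 1" by simp
  moreover have "w - 1 < M * ((w - 1) div M) + M"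
    using assms(1) by (metis add.commute mod_less_divisor mult_div_mod_eq nat_add_left_cancel_less)
  ultimately show "c * M + 1 \<le> w \<and> w \<le> (c + 1) * M"
    using assms(2) by (simp add: algebra_simps; linarith)
next
  assume "c * M + 1 \<le> w \<and> w \<le> (c + 1) * M"
  then show "(w - 1) div M = c"
    by (intro div_nat_eqI) (use assms in \<open>auto simp: algebra_simps\<close>)
qed

lemma block_end_le:
  fixes x :: nat
  assumes "N \<ge> 1" "x < N ^ n" "i \<le> n"
  shows "(x div N ^ i + 1) * N ^ i \<le> N ^ n"
proof -
  have split: "N ^ n = N ^ i * N ^ (n - i)"
    using assms(3) by (simp flip: power_add)
  then have "x div N ^ i < N ^ (n - i)"
    using assms(2) by (intro less_mult_imp_div_less) (simp add: mult.commute)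
  then show ?thesis
    unfolding split by (metis Suc_eq_plus1 Suc_leI mult.commute mult_le_mono1)
qed

lemma same_block_mono:
  assumes "same_block N k a b" "k \<le> k'"
  shows "same_block N k' a b"
proof -
  obtain d where d: "k' = k + d" using assms(2) le_Suc_ex by blast
  have "(c - 1) div N ^ k' = ((c - 1) div N ^ k) div N ^ d" for c
    by (simp add: d power_add div_mult2_eq)
  then show ?thesis using assms(1) unfolding same_block_def by metis
qed

lemma same_block_commute: "same_block N k a b = same_block N k b a"
  unfolding same_block_def by auto

lemma same_block_top:
  assumes "a \<in> lattice N n" "b \<in> lattice N n"
  shows "same_block N n a b"
  using assms unfolding same_block_def lattice_def by auto

lemma hdist_commute: "hdist N a b = hdist N b a"
  unfolding hdist_def using same_block_commute by metis

lemma hdist_le_iff: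
  assumes "a \<in> lattice N n" "b \<in> lattice N n"
  shows "hdist N a b \<le> i \<longleftrightarrow> same_block N i a b"
proof
  assume "hdist N a b \<le> i"
  moreover have "same_block N (hdist N a b) a b"
    unfolding hdist_def by (rule LeastI[of _ n]) (rule same_block_top[OF assms])
  ultimately show "same_block N i a b" using same_block_mono by blast
next
  assume "same_block N i a b"
  then show "hdist N a b \<le> i" unfolding hdist_def by (rule Least_le)
qed

lemma hdist_range:
  assumes "a \<in> lattice N n" "b \<in> lattice N n" "a \<noteq> b"
  shows "hdist N a b \<in> {1..n}"
proof -
  have "\<not> same_block N 0 a b"
    using assms unfolding same_block_def lattice_def by auto
  then show ?thesis
    using hdist_le_iff[OF assms(1,2)] same_block_top[OF assms(1,2)] by fastforce
qed

lemma block_eq_atLeastAtMost: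
  assumes "N \<ge> 1" "v \<in> lattice N n" "i \<le> n"
  shows "{w \<in> lattice N n. same_block N i v w} =
         {((v - 1) div N ^ i) * N ^ i + 1 .. ((v - 1) div N ^ i + 1) * N ^ i}"
proof -
  have v: "1 \<le> v" "v - 1 < N ^ n" using assms(2) unfolding lattice_def by auto
  have pos: "0 < N ^ i" using assms(1) by simp
  let ?c = "(v - 1) div N ^ i"
  have top: "(?c + 1) * N ^ i \<le> N ^ n" by (rule block_end_le[OF assms(1) v(2) assms(3)])
  show ?thesis
  proof (intro set_eqI iffI)
    fix w assume "w \<in> {w \<in> lattice N n. same_block N i v w}"
    then have "1 \<le> w" "(w - 1) div N ^ i = ?c" unfolding lattice_def same_block_def by auto
    then show "w \<in> {?c * N ^ i + 1 .. (?c + 1) * N ^ i}" using pred_div_eq_iff[OF pos] by auto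
  next
    fix w assume w: "w \<in> {?c * N ^ i + 1 .. (?c + 1) * N ^ i}"
    then have "1 \<le> w" by auto
    with w have "(w - 1) div N ^ i = ?c" using pred_div_eq_iff[OF pos] by auto
    then show "w \<in> {w \<in> lattice N n. same_block N i v w}"
      using w top \<open>1 \<le> w\<close> unfolding lattice_def same_block_def by auto
  qed
qed

lemma card_block:
  assumes "N \<ge> 1" "v \<in> lattice N n" "i \<le> n"
  shows "card {w \<in> lattice N n. same_block N i v w} = N ^ i"
  unfolding block_eq_atLeastAtMost[OF assms] by (simp add: algebra_simps)

lemma card_punctured_ball:
  assumes "N \<ge> 1" "v \<in> lattice N n" "l \<le> n"
  shows "real (card {w \<in> lattice N n - {v}. hdist N v w \<le> l}) = real N ^ l - 1"
proof -
  have "{w \<in> lattice N n - {v}. hdist N v w \<le> l} = {w \<in> lattice N n. same_block N l v w} - {v}"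
    using hdist_le_iff[OF assms(2)] by auto
  moreover have "v \<in> {w \<in> lattice N n. same_block N l v w}"
    using assms(2) unfolding same_block_def by auto
  ultimately have "card {w \<in> lattice N n - {v}. hdist N v w \<le> l} = N ^ l - 1"
    using card_block[OF assms] by (simp add: card_Diff_singleton)
  moreover have "N ^ l \<ge> 1" using assms(1) by simp
  ultimately show ?thesis by (simp add: of_nat_diff)
qed

section \<open>The energy of a configuration\<close>

definition plus_sites :: "nat \<Rightarrow> nat \<Rightarrow> (nat \<Rightarrow> int) \<Rightarrow> nat set" where
  "plus_sites N n \<sigma> = {v \<in> lattice N n. \<sigma> v = 1}"

lemma plus_sites_subset: "plus_sites N n \<sigma> \<subseteq> lattice N n"
  unfolding plus_sites_def by auto

lemma plus_sites_all_minus [simp]: "plus_sites N n all_minus = {}"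
  unfolding plus_sites_def all_minus_def by auto

lemma plus_sites_all_plus [simp]: "plus_sites N n (all_plus N n) = lattice N n"
  unfolding plus_sites_def all_plus_def by auto

lemma plus_sites_flip: "plus_sites N n (flip \<sigma> v) \<subseteq> insert v (plus_sites N n \<sigma>)"
  unfolding plus_sites_def flip_def by auto

lemma spin_eq:
  assumes "\<sigma> \<in> configs N n" "v \<in> lattice N n"
  shows "real_of_int (\<sigma> v) = (if v \<in> plus_sites N n \<sigma> then 1 else -1)"
  using assms unfolding configs_def plus_sites_def by auto

lemma sum_spins_eq:
  assumes "\<sigma> \<in> configs N n"
  shows "(\<Sum>v \<in> lattice N n. real_of_int (\<sigma> v)) = 2 * real (card (plus_sites N n \<sigma>)) - real N ^ n"
proof -
  have "(\<Sum>v \<in> lattice N n. real_of_int (\<sigma> v))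
      = (\<Sum>v \<in> lattice N n. 2 * (if v \<in> plus_sites N n \<sigma> then 1 else 0) - 1)"
    by (intro sum.cong refl) (simp add: spin_eq[OF assms])
  also have "\<dots> = 2 * real (card (plus_sites N n \<sigma>)) - real N ^ n"
    using plus_sites_subset[of N n \<sigma>]
    by (simp add: sum_subtractf sum_distrib_left[symmetric] sum.If_cases Int_absorb1)
  finally show ?thesis .
qed

lemma sum_ordered_pairs_symmetric:
  fixes g :: "'a :: linorder \<Rightarrow> 'a \<Rightarrow> real"
  assumes "finite A" "\<And>v w. g v w = g w v" "\<And>v. v \<in> A \<Longrightarrow> g v v = 0"
  shows "(\<Sum>(v, w) \<in> {(v, w). v \<in> A \<and> w \<in> A \<and> v < w}. g v w) = (\<Sum>v\<in>A. \<Sum>w\<in>A. g v w) / 2"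
proof -
  let ?upper = "\<lambda>v w. if v < w then g v w else 0"
  have "{(v, w). v \<in> A \<and> w \<in> A \<and> v < w} = {p \<in> A \<times> A. fst p < snd p}" by auto
  then have pairs: "(\<Sum>(v, w) \<in> {(v, w). v \<in> A \<and> w \<in> A \<and> v < w}. g v w) = (\<Sum>v\<in>A. \<Sum>w\<in>A. ?upper v w)"
    using assms(1) by (simp add: sum.inter_filter sum.cartesian_product split_def)
  have "g v w = ?upper v w + ?upper w v" if "v \<in> A" for v w
    using assms(2) assms(3)[OF that] by (cases v w rule: linorder_cases) auto
  then have "(\<Sum>v\<in>A. \<Sum>w\<in>A. g v w) = (\<Sum>v\<in>A. \<Sum>w\<in>A. ?upper v w + ?upper w v)"
    by (intro sum.cong refl) auto
  also have "\<dots> = (\<Sum>v\<in>A. \<Sum>w\<in>A. ?upper v w) + (\<Sum>v\<in>A. \<Sum>w\<in>A. ?upper w v)"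
    by (simp add: sum.distrib)
  also have "(\<Sum>v\<in>A. \<Sum>w\<in>A. ?upper w v) = (\<Sum>v\<in>A. \<Sum>w\<in>A. ?upper v w)"
    by (rule sum.swap)
  finally show ?thesis unfolding pairs by simp
qed

lemma sum_cut_symmetric:
  fixes f :: "'a \<Rightarrow> 'a \<Rightarrow> real"
  assumes "finite A" "P \<subseteq> A" "\<And>v w. f v w = f w v"
  shows "(\<Sum>v\<in>A. \<Sum>w\<in>A. if (v \<in> P) = (w \<in> P) then 0 else f v w) = 2 * (\<Sum>v\<in>P. \<Sum>w\<in>A - P. f v w)"
proof -
  let ?out = "\<lambda>v w. if v \<in> P \<and> w \<notin> P then f v w else 0"
  have "(\<Sum>v\<in>A. \<Sum>w\<in>A. if (v \<in> P) = (w \<in> P) then 0 else f v w)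
      = (\<Sum>v\<in>A. \<Sum>w\<in>A. ?out v w) + (\<Sum>v\<in>A. \<Sum>w\<in>A. ?out w v)"
    by (simp add: sum.distrib[symmetric]) (intro sum.cong refl, use assms(3) in auto)
  also have "(\<Sum>v\<in>A. \<Sum>w\<in>A. ?out w v) = (\<Sum>v\<in>A. \<Sum>w\<in>A. ?out v w)"
    by (rule sum.swap)
  also have "(\<Sum>v\<in>A. \<Sum>w\<in>A. ?out v w) = (\<Sum>v\<in>A. if v \<in> P then (\<Sum>w\<in>A - P. f v w) else 0)"
  proof (intro sum.cong refl)
    fix v assume "v \<in> A"
    have "{w \<in> A. w \<notin> P} = A - P" by auto
    then show "(\<Sum>w\<in>A. ?out v w) = (if v \<in> P then (\<Sum>w\<in>A - P. f v w) else 0)"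
      using sum.inter_filter[OF assms(1), of "f v" "\<lambda>w. w \<notin> P"] by auto
  qed
  also have "\<dots> = (\<Sum>v\<in>P. \<Sum>w\<in>A - P. f v w)"
    using assms(1,2) by (simp add: sum.If_cases Int_absorb1)
  finally show ?thesis by simp
qed

lemma hamiltonian_minus_ground:
  assumes "\<sigma> \<in> configs N n"
  shows "hamiltonian N n J h \<sigma> - hamiltonian N n J h all_minus =
         (\<Sum>v\<in>plus_sites N n \<sigma>. \<Sum>w\<in>lattice N n - plus_sites N n \<sigma>. J (hdist N v w))
         - h * card (plus_sites N n \<sigma>)"
proof -
  let ?L = "lattice N n" and ?P = "plus_sites N n \<sigma>"
  let ?pairs = "{(v, w). v \<in> ?L \<and> w \<in> ?L \<and> v < w}"
  define f where "f v w = J (hdist N v w)" for v w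
  define g where "g v w = (if (v \<in> ?P) = (w \<in> ?P) then 0 else f v w)" for v w
  have f_commute: "f v w = f w v" for v w
    unfolding f_def using hdist_commute by metis
  have "(\<Sum>(v, w) \<in> ?pairs. f v w * real_of_int (\<sigma> v) * real_of_int (\<sigma> w)) - (\<Sum>(v, w) \<in> ?pairs. f v w)
      = (\<Sum>(v, w) \<in> ?pairs. -2 * g v w)"
    unfolding sum_subtractf[symmetric] by (intro sum.cong refl) (auto simp: spin_eq[OF assms] g_def)
  also have "\<dots> = (\<Sum>v\<in>?L. \<Sum>w\<in>?L. -2 * g v w) / 2"
    by (rule sum_ordered_pairs_symmetric) (auto simp: g_def f_commute)
  also have "\<dots> = - (\<Sum>v\<in>?L. \<Sum>w\<in>?L. g v w)"
    by (simp add: sum_negf sum_distrib_left[symmetric])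
  also have "\<dots> = -2 * (\<Sum>v\<in>?P. \<Sum>w\<in>?L - ?P. f v w)"
    using sum_cut_symmetric[of ?L ?P f, OF finite_lattice plus_sites_subset f_commute]
    unfolding g_def by simp
  finally have interface: "(\<Sum>(v, w) \<in> ?pairs. f v w * real_of_int (\<sigma> v) * real_of_int (\<sigma> w))
      - (\<Sum>(v, w) \<in> ?pairs. f v w) = -2 * (\<Sum>v\<in>?P. \<Sum>w\<in>?L - ?P. f v w)" .
  have "hamiltonian N n J h \<sigma> - hamiltonian N n J h all_minus
      = - ((\<Sum>(v, w) \<in> ?pairs. f v w * real_of_int (\<sigma> v) * real_of_int (\<sigma> w))
           - (\<Sum>(v, w) \<in> ?pairs. f v w)) / 2
        - h * ((\<Sum>v\<in>?L. real_of_int (\<sigma> v)) + real (card ?L)) / 2"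
    unfolding hamiltonian_def all_minus_def f_def by (simp add: algebra_simps)
  then show ?thesis
    unfolding interface sum_spins_eq[OF assms] by (simp add: f_def algebra_simps)
qed

lemma sum_by_level:
  fixes g :: "nat \<Rightarrow> real"
  assumes "finite A" "\<And>a. a \<in> A \<Longrightarrow> d a \<in> {1..n}"
  shows "(\<Sum>a\<in>A. g (d a)) = (\<Sum>l = 1..n. g l * real (card {a \<in> A. d a = l}))"
proof -
  have "(\<Sum>a\<in>A. g (d a)) = (\<Sum>l\<in>{1..n}. \<Sum>a\<in>{a \<in> A. d a = l}. g (d a))"
    by (rule sum.group[symmetric]) (use assms in auto)
  then show ?thesis by (simp add: mult.commute)
qed

lemma card_level_eq_diff:
  assumes "finite A" "1 \<le> l"
  shows "real (card {a \<in> A. d a = (l :: nat)})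
       = real (card {a \<in> A. d a \<le> l}) - real (card {a \<in> A. d a \<le> l - 1})"
proof -
  have "{a \<in> A. d a = l} = {a \<in> A. d a \<le> l} - {a \<in> A. d a \<le> l - 1}"
    and "{a \<in> A. d a \<le> l - 1} \<subseteq> {a \<in> A. d a \<le> l}"
    using assms(2) by auto
  then show ?thesis
    using assms(1) by (simp add: card_Diff_subset card_mono of_nat_diff finite_subset)
qed

lemma power_diff_pred:
  fixes x :: real
  assumes "x \<noteq> 0" "1 \<le> l"
  shows "x ^ l - x ^ (l - 1) = (1 - 1 / x) * x ^ l"
  using assms by (cases l) (simp_all add: field_simps)

lemma sum_level_increments:
  fixes J :: "nat \<Rightarrow> real" and x :: real
  assumes "x \<noteq> 0"
  shows "(\<Sum>l = m+1..n. J l * (x ^ l - x ^ (l - 1))) = (1 - 1 / x) * (\<Sum>l = m+1..n. J l * x ^ l)"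
proof -
  have "(\<Sum>l = m+1..n. J l * (x ^ l - x ^ (l - 1))) = (\<Sum>l = m+1..n. (1 - 1 / x) * (J l * x ^ l))"
    using power_diff_pred[OF assms] by (intro sum.cong refl) auto
  then show ?thesis by (simp add: sum_distrib_left)
qed

lemma sum_levels_split:
  fixes f :: "nat \<Rightarrow> 'a :: comm_monoid_add"
  assumes "m \<le> n"
  shows "(\<Sum>l = 1..n. f l) = (\<Sum>l = 1..m. f l) + (\<Sum>l = m+1..n. f l)"
  using sum.ub_add_nat[of 1 m f "n - m"] assms by simp

section \<open>Lower bound on the energy\<close>

lemma sum_capped_couplings:
  fixes J :: "nat \<Rightarrow> real"
  assumes "N \<ge> 2" "v \<in> lattice N n" "m + 1 \<le> n"
  shows "(\<Sum>w \<in> lattice N n - {v}. J (max (hdist N v w) (m + 1)))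
       = J (m + 1) * (real N ^ m - 1) + (1 - 1 / real N) * (\<Sum>i = m+1..n. J i * real N ^ i)"
proof -
  let ?K = "\<lambda>l. J (max l (m + 1))" and ?inc = "\<lambda>l. real N ^ l - real N ^ (l - 1)"
  have "(\<Sum>w \<in> lattice N n - {v}. ?K (hdist N v w))
      = (\<Sum>l = 1..n. ?K l * real (card {w \<in> lattice N n - {v}. hdist N v w = l}))"
    by (rule sum_by_level) (use hdist_range assms(2) in auto)
  also have "\<dots> = (\<Sum>l = 1..n. ?K l * ?inc l)"
  proof (intro sum.cong refl)
    fix l assume l: "l \<in> {1..n}"
    then have "real (card {w \<in> lattice N n - {v}. hdist N v w = l}) = real N ^ l - 1 - (real N ^ (l - 1) - 1)"
      using card_level_eq_diff[of "lattice N n - {v}" l "hdist N v"] assms(1,2)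
        card_punctured_ball[of N v n l] card_punctured_ball[of N v n "l - 1"] by auto
    then show "?K l * real (card {w \<in> lattice N n - {v}. hdist N v w = l}) = ?K l * ?inc l" by simp
  qed
  also have "\<dots> = (\<Sum>l = 1..m. ?K l * ?inc l) + (\<Sum>l = m+1..n. ?K l * ?inc l)"
    by (rule sum_levels_split) (use assms(3) in simp)
  also have "(\<Sum>l = 1..m. ?K l * ?inc l) = J (m + 1) * (real N ^ m - 1)"
  proof -
    have "(\<Sum>l = 1..m. ?inc l) = real N ^ m - 1"
      by (induction m) (auto simp: sum.cl_ivl_Suc)
    then show ?thesis by (simp add: sum_distrib_left[symmetric])
  qed
  also have "(\<Sum>l = m+1..n. ?K l * ?inc l) = (\<Sum>l = m+1..n. J l * ?inc l)"
    by (intro sum.cong refl) simp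
  finally show ?thesis
    using sum_level_increments[of "real N" J m n] assms(1) by simp
qed

lemma cut_row_lower:
  fixes J :: "nat \<Rightarrow> real"
  assumes N: "N \<ge> 2" and J_mono: "\<forall>i j. 1 \<le> i \<longrightarrow> i \<le> j \<longrightarrow> j \<le> n \<longrightarrow> J j \<le> J i"
    and P: "P \<subseteq> lattice N n" "v \<in> P" and m: "m + 1 \<le> n"
  shows "(\<Sum>w \<in> lattice N n - P. J (hdist N v w)) \<ge>
         (1 - 1 / real N) * (\<Sum>i = m+1..n. J i * real N ^ i) + J (m + 1) * real N ^ m
         - real (card P) * J (m + 1)"
proof -
  let ?L = "lattice N n" and ?K = "\<lambda>w. J (max (hdist N v w) (m + 1))"
  have v: "v \<in> ?L" using P by auto
  have finP: "finite P" using P(1) by (rule finite_subset) simp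
  have K_le: "?K w \<le> J (hdist N v w)" "?K w \<le> J (m + 1)" if "w \<in> ?L - {v}" for w
    using hdist_range[OF v, of w] that J_mono m by (auto simp: max_def)
  have "(\<Sum>w \<in> ?L - {v}. ?K w) = (\<Sum>w \<in> ?L - P. ?K w) + (\<Sum>w \<in> P - {v}. ?K w)"
  proof -
    have "?L - {v} = (?L - P) \<union> (P - {v})" using P by auto
    then show ?thesis by (simp only:) (rule sum.union_disjoint, use finP in auto)
  qed
  moreover have "(\<Sum>w \<in> ?L - P. ?K w) \<le> (\<Sum>w \<in> ?L - P. J (hdist N v w))"
    using P by (intro sum_mono K_le(1)) auto
  moreover have "(\<Sum>w \<in> P - {v}. ?K w) \<le> (real (card P) - 1) * J (m + 1)"
  proof -
    have "(\<Sum>w \<in> P - {v}. ?K w) \<le> (\<Sum>w \<in> P - {v}. J (m + 1))"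
      using P by (intro sum_mono K_le(2)) auto
    also have "\<dots> = (real (card P) - 1) * J (m + 1)"
    proof -
      have "card P \<ge> 1" using P(2) finP by (auto simp: Suc_le_eq card_gt_0_iff)
      then show ?thesis using P(2) finP by (simp add: card_Diff_singleton of_nat_diff)
    qed
    finally show ?thesis .
  qed
  ultimately show ?thesis
    using sum_capped_couplings[OF N v m, of J] by (simp add: algebra_simps)
qed

lemma hamiltonian_minus_ground_lower:
  fixes J :: "nat \<Rightarrow> real"
  assumes "N \<ge> 2" "\<forall>i j. 1 \<le> i \<longrightarrow> i \<le> j \<longrightarrow> j \<le> n \<longrightarrow> J j \<le> J i"
    and "m + 1 \<le> n" "\<sigma> \<in> configs N n"
  defines "p \<equiv> real (card (plus_sites N n \<sigma>))"
  shows "hamiltonian N n J h \<sigma> - hamiltonian N n J h all_minus \<ge>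
     p * ((1 - 1 / real N) * (\<Sum>i = m+1..n. J i * real N ^ i) + J (m + 1) * real N ^ m - h - J (m + 1) * p)"
proof -
  let ?P = "plus_sites N n \<sigma>"
  let ?row = "(1 - 1 / real N) * (\<Sum>i = m+1..n. J i * real N ^ i) + J (m + 1) * real N ^ m - p * J (m + 1)"
  have "(\<Sum>v\<in>?P. ?row) \<le> (\<Sum>v\<in>?P. \<Sum>w \<in> lattice N n - ?P. J (hdist N v w))"
    unfolding p_def by (intro sum_mono cut_row_lower[OF assms(1,2) plus_sites_subset _ assms(3)])
  then show ?thesis
    unfolding hamiltonian_minus_ground[OF assms(4)] p_def by (simp add: algebra_simps)
qed

section \<open>Paths and the communication height\<close>

definition segment_config :: "nat \<Rightarrow> nat \<Rightarrow> int" where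
  "segment_config x = (\<lambda>v. if 1 \<le> v \<and> v \<le> x then 1 else -1)"

definition segment_path :: "nat \<Rightarrow> nat \<Rightarrow> (nat \<Rightarrow> int) list" where
  "segment_path N n = map segment_config [0..<N ^ n + 1]"

lemma segment_config_in_configs: "x \<le> N ^ n \<Longrightarrow> segment_config x \<in> configs N n"
  unfolding segment_config_def configs_def lattice_def by auto

lemma is_path_segment_path: "is_path N n all_minus (all_plus N n) (segment_path N n)"
proof -
  let ?p = "map segment_config [0..<N ^ n + 1]"
  have first: "segment_config 0 = all_minus"
    unfolding segment_config_def all_minus_def by auto
  have last: "segment_config (N ^ n) = all_plus N n"
    unfolding segment_config_def all_plus_def lattice_def by auto
  have step: "segment_config (Suc i) = flip (segment_config i) (Suc i)" for i
    unfolding segment_config_def flip_def by (auto simp: fun_eq_iff)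
  show ?thesis unfolding is_path_def segment_path_def
  proof (intro conjI allI impI)
    show "hd ?p = all_minus" using first by (simp add: hd_map hd_upt del: upt_Suc)
    show "last ?p = all_plus N n" using last by (simp add: last_map del: upt_Suc)
    show "set ?p \<subseteq> configs N n" using segment_config_in_configs by (auto simp del: upt_Suc)
    fix i assume "Suc i < length ?p"
    then have i: "Suc i \<le> N ^ n" by simp
    then have "?p ! Suc i = flip (?p ! i) (Suc i)" by (simp add: step nth_map_upt del: upt_Suc)
    moreover have "Suc i \<in> lattice N n" using i unfolding lattice_def by auto
    ultimately show "\<exists>v \<in> lattice N n. ?p ! Suc i = flip (?p ! i) v" by blast
  qed (simp del: upt_Suc)
qed

lemma discrete_intermediate_value:
  fixes f :: "nat \<Rightarrow> nat"
  assumes "f 0 \<le> x" "x \<le> f L" "\<forall>i<L. f (Suc i) \<le> f i + 1"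
  shows "\<exists>i\<le>L. f i = x"
  using assms
proof (induction L)
  case (Suc L)
  show ?case
  proof (cases "x \<le> f L")
    case True
    with Suc obtain i where "i \<le> L" "f i = x" by auto
    then show ?thesis by (intro exI[of _ i]) simp
  next
    case False
    with Suc.prems(2,3) have "f (Suc L) = x" by fastforce
    then show ?thesis by auto
  qed
qed simp

lemma path_hits_every_card:
  assumes p: "is_path N n all_minus (all_plus N n) p" and x: "x \<le> N ^ n"
  shows "\<exists>\<sigma> \<in> set p. card (plus_sites N n \<sigma>) = x"
proof -
  define f where "f i = card (plus_sites N n (p ! i))" for i
  define L where "L = length p - 1"
  have ne: "p \<noteq> []" and hd: "hd p = all_minus" and la: "last p = all_plus N n"
    using p unfolding is_path_def by auto
  have "f 0 = 0" "f L = N ^ n"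
    unfolding f_def L_def using hd la ne by (simp_all add: hd_conv_nth last_conv_nth)
  moreover have "f (Suc i) \<le> f i + 1" if "i < L" for i
  proof -
    have "Suc i < length p" using that unfolding L_def by simp
    then obtain v where "p ! Suc i = flip (p ! i) v" using p unfolding is_path_def by blast
    then have "plus_sites N n (p ! Suc i) \<subseteq> insert v (plus_sites N n (p ! i))"
      using plus_sites_flip by simp
    then have "f (Suc i) \<le> card (insert v (plus_sites N n (p ! i)))"
      unfolding f_def by (rule card_mono[rotated]) (simp add: plus_sites_def)
    also have "\<dots> \<le> f i + 1" unfolding f_def by (simp add: card_insert_le_m1 card_insert_if)
    finally show ?thesis .
  qed
  ultimately obtain i where "i \<le> L" "f i = x"
    using discrete_intermediate_value[of f x L] x by auto
  moreover have "i < length p" using \<open>i \<le> L\<close> ne unfolding L_def by (cases p) auto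
  ultimately show ?thesis unfolding f_def by (metis nth_mem)
qed

lemma Gamma_star_ge_level:
  assumes "x \<le> N ^ n"
    and "\<And>\<sigma>. \<sigma> \<in> configs N n \<Longrightarrow> card (plus_sites N n \<sigma>) = x \<Longrightarrow>
            hamiltonian N n J h \<sigma> - hamiltonian N n J h all_minus \<ge> c"
  shows "Gamma_star N n J h \<ge> c"
proof -
  let ?H = "hamiltonian N n J h"
  have "?H all_minus + c \<le> comm_height N n J h all_minus (all_plus N n)"
    unfolding comm_height_def
  proof (rule cINF_greatest)
    show "{p. is_path N n all_minus (all_plus N n) p} \<noteq> {}"
      using is_path_segment_path by blast
    fix p assume "p \<in> {p. is_path N n all_minus (all_plus N n) p}"
    then have p: "is_path N n all_minus (all_plus N n) p" by simp
    obtain \<sigma> where \<sigma>: "\<sigma> \<in> set p" "card (plus_sites N n \<sigma>) = x"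
      using path_hits_every_card[OF p assms(1)] by blast
    have "\<sigma> \<in> configs N n" using \<sigma> p unfolding is_path_def by auto
    then have "?H all_minus + c \<le> ?H \<sigma>" using assms(2) \<sigma>(2) by force
    also have "?H \<sigma> \<le> Max (?H ` set p)" using \<sigma>(1) by (intro Max_ge) auto
    finally show "?H all_minus + c \<le> Max (?H ` set p)" .
  qed
  then show ?thesis unfolding Gamma_star_def by simp
qed

lemma Gamma_star_le_segments:
  assumes "\<And>x. x \<le> N ^ n \<Longrightarrow>
             hamiltonian N n J h (segment_config x) - hamiltonian N n J h all_minus \<le> c"
  shows "Gamma_star N n J h \<le> c"
proof -
  let ?H = "hamiltonian N n J h"
  have "comm_height N n J h all_minus (all_plus N n) \<le> Max (?H ` set (segment_path N n))"
    unfolding comm_height_def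
  proof (rule cINF_lower)
    show "segment_path N n \<in> {p. is_path N n all_minus (all_plus N n) p}"
      using is_path_segment_path by blast
    show "bdd_below ((\<lambda>p. Max (?H ` set p)) ` {p. is_path N n all_minus (all_plus N n) p})"
    proof (rule bdd_belowI[of _ "?H all_minus"])
      fix y assume "y \<in> (\<lambda>p. Max (?H ` set p)) ` {p. is_path N n all_minus (all_plus N n) p}"
      then obtain p where p: "is_path N n all_minus (all_plus N n) p" "y = Max (?H ` set p)" by auto
      then have "all_minus \<in> set p" unfolding is_path_def by (metis hd_in_set)
      then show "?H all_minus \<le> y" unfolding p(2) by (intro Max_ge) auto
    qed
  qed
  also have "\<dots> \<le> ?H all_minus + c"
  proof -
    have "set (segment_path N n) = segment_config ` {0..N ^ n}"
      unfolding segment_path_def by (auto simp del: upt_Suc)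
    then show ?thesis using assms by (force simp: Max_le_iff)
  qed
  finally show ?thesis unfolding Gamma_star_def by simp
qed

section \<open>Energy along the segment path\<close>

definition block_cut :: "nat \<Rightarrow> nat \<Rightarrow> nat \<Rightarrow> real" where
  "block_cut N l x = real (x mod N ^ l) * (real N ^ l - real (x mod N ^ l))"

lemma block_cut_nonneg: "N \<ge> 1 \<Longrightarrow> block_cut N l x \<ge> 0"
  unfolding block_cut_def by (simp add: less_imp_le)

lemma block_cut_mod_eq:
  assumes "l \<le> m" "k mod N ^ m = x mod N ^ m"
  shows "block_cut N l k = block_cut N l x"
proof -
  have "N ^ l dvd N ^ m" using assms(1) by (simp add: le_imp_power_dvd)
  then have "k mod N ^ l = x mod N ^ l" by (metis assms(2) mod_mod_cancel)
  then show ?thesis unfolding block_cut_def by simp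
qed

lemma segment_cut_same_block_eq:
  assumes N: "N \<ge> 1" and x: "x < N ^ n" and i: "i \<le> n"
  shows "{p \<in> {1..x} \<times> {x+1..N ^ n}. same_block N i (fst p) (snd p)} =
         {(x div N ^ i) * N ^ i + 1..x} \<times> {x + 1..(x div N ^ i + 1) * N ^ i}"
proof -
  let ?M = "N ^ i" and ?c = "x div N ^ i"
  have M: "?M > 0" using N by simp
  have top: "(?c + 1) * ?M \<le> N ^ n" by (rule block_end_le[OF N x i])
  show ?thesis
  proof (intro set_eqI iffI)
    fix p assume "p \<in> {p \<in> {1..x} \<times> {x+1..N ^ n}. same_block N i (fst p) (snd p)}"
    then obtain v w where p: "p = (v, w)" "1 \<le> v" "v \<le> x" "x + 1 \<le> w" "w \<le> N ^ n"
      "(v - 1) div ?M = (w - 1) div ?M" unfolding same_block_def by auto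
    define b where "b = (v - 1) div ?M"
    have vb: "b * ?M + 1 \<le> v" using pred_div_eq_iff[OF M p(2), of b] b_def by simp
    have wb: "w \<le> (b + 1) * ?M" using pred_div_eq_iff[OF M, of w b] b_def p by simp
    have "?c = b"
      by (rule div_nat_eqI) (use vb wb p in \<open>auto simp: algebra_simps\<close>)
    then show "p \<in> {?c * ?M + 1..x} \<times> {x + 1..(?c + 1) * ?M}" using p vb wb by auto
  next
    fix p assume "p \<in> {?c * ?M + 1..x} \<times> {x + 1..(?c + 1) * ?M}"
    then obtain v w where p: "p = (v, w)" "?c * ?M + 1 \<le> v" "v \<le> x" "x + 1 \<le> w"
      "w \<le> (?c + 1) * ?M" by auto
    have "(v - 1) div ?M = ?c" "(w - 1) div ?M = ?c"
      using pred_div_eq_iff[OF M, of v ?c] pred_div_eq_iff[OF M, of w ?c] p by simp_all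
    then show "p \<in> {p \<in> {1..x} \<times> {x+1..N ^ n}. same_block N i (fst p) (snd p)}"
      using p top unfolding same_block_def by auto
  qed
qed

lemma card_segment_cut_same_block:
  assumes N: "N \<ge> 1" and x: "x \<le> N ^ n" and i: "i \<le> n"
  shows "real (card {p \<in> {1..x} \<times> {x+1..N ^ n}. same_block N i (fst p) (snd p)}) = block_cut N i x"
proof (cases "x = N ^ n")
  case True
  then have "x mod N ^ i = 0" using i by (simp add: le_imp_power_dvd)
  with True show ?thesis unfolding block_cut_def by simp
next
  case False
  let ?M = "N ^ i" and ?c = "x div N ^ i"
  have x_eq: "x = ?c * ?M + x mod ?M" by (rule div_mult_mod_eq[symmetric])
  have "x mod ?M < ?M" using N by simp
  then have "(?c + 1) * ?M - x = ?M - x mod ?M" "x - ?c * ?M = x mod ?M"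
    using x_eq by (simp, linarith)+
  then have "card ({?c * ?M + 1..x} \<times> {x + 1..(?c + 1) * ?M}) = x mod ?M * (?M - x mod ?M)"
    by (simp add: card_cartesian_product)
  moreover have x_less: "x < N ^ n" using False x by simp
  ultimately show ?thesis
    unfolding segment_cut_same_block_eq[OF N x_less i] block_cut_def
    using \<open>x mod ?M < ?M\<close> by (simp add: of_nat_diff)
qed

lemma hamiltonian_minus_ground_segment:
  fixes J :: "nat \<Rightarrow> real"
  assumes N: "N \<ge> 1" and x: "x \<le> N ^ n"
  shows "hamiltonian N n J h (segment_config x) - hamiltonian N n J h all_minus =
         (\<Sum>l = 1..n. J l * (block_cut N l x - block_cut N (l - 1) x)) - h * real x"
proof -
  let ?P = "{1..x}" and ?Q = "{x+1..N ^ n}"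
  define d where "d p = hdist N (fst p) (snd p)" for p :: "nat \<times> nat"
  have P: "plus_sites N n (segment_config x) = ?P"
    using x unfolding plus_sites_def segment_config_def lattice_def by auto
  have Q: "lattice N n - ?P = ?Q" unfolding lattice_def by auto
  have in_lattice: "fst p \<in> lattice N n" "snd p \<in> lattice N n" "fst p \<noteq> snd p" if "p \<in> ?P \<times> ?Q" for p
    using x that unfolding lattice_def by auto
  have card_le: "real (card {p \<in> ?P \<times> ?Q. d p \<le> k}) = block_cut N k x" if "k \<le> n" for k
  proof -
    have "{p \<in> ?P \<times> ?Q. d p \<le> k} = {p \<in> ?P \<times> ?Q. same_block N k (fst p) (snd p)}"
      using in_lattice hdist_le_iff unfolding d_def by blast
    then show ?thesis using card_segment_cut_same_block[OF N x that] by simp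
  qed
  have "(\<Sum>v\<in>?P. \<Sum>w\<in>?Q. J (hdist N v w)) = (\<Sum>p \<in> ?P \<times> ?Q. J (d p))"
    unfolding d_def by (simp add: sum.cartesian_product split_def)
  also have "\<dots> = (\<Sum>l = 1..n. J l * real (card {p \<in> ?P \<times> ?Q. d p = l}))"
  proof (rule sum_by_level)
    fix p assume "p \<in> ?P \<times> ?Q"
    then show "d p \<in> {1..n}" unfolding d_def using hdist_range in_lattice by blast
  qed simp
  also have "\<dots> = (\<Sum>l = 1..n. J l * (block_cut N l x - block_cut N (l - 1) x))"
  proof (intro sum.cong refl)
    fix l assume l: "l \<in> {1..n}"
    then have "l \<le> n" "l - 1 \<le> n" by auto
    with l show "J l * real (card {p \<in> ?P \<times> ?Q. d p = l}) = J l * (block_cut N l x - block_cut N (l - 1) x)"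
      using card_level_eq_diff[of "?P \<times> ?Q" l d] card_le by simp
  qed
  finally show ?thesis
    unfolding hamiltonian_minus_ground[OF segment_config_in_configs[OF x]] P Q by simp
qed

lemma sum_increments_by_parts:
  fixes f c :: "nat \<Rightarrow> real"
  assumes "1 \<le> a" "a \<le> n + 1"
  shows "(\<Sum>l = a..n. f l * (c l - c (l - 1))) =
         (\<Sum>l = a..n. (f l - f (l + 1)) * c l) + f (n + 1) * c n - f a * c (a - 1)"
  using assms
proof (induction n)
  case (Suc n)
  show ?case
  proof (cases "a \<le> n + 1")
    case True
    then show ?thesis using Suc.IH[OF Suc.prems(1) True] by (simp add: sum.cl_ivl_Suc algebra_simps)
  next
    case False
    then have "a = Suc n + 1" using Suc.prems by simp
    then show ?thesis by simp
  qed
qed auto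

lemma mod_power_eq_sum_digits:
  assumes "N \<ge> 1"
  shows "real (k mod N ^ i) = (\<Sum>j<i. real (digit N k j) * real N ^ j)"
proof (induction i)
  case (Suc i)
  have "k mod N ^ Suc i = N ^ i * digit N k i + k mod N ^ i"
    unfolding digit_def by (subst power_Suc2, rule mod_mult2_eq)
  then show ?case using Suc.IH by (simp add: algebra_simps)
qed simp

text \<open>The first summand of the numerator in (A3): the energy carried by the levels up to \<open>m\<close>
  along the segment path.\<close>
definition low_block_energy :: "nat \<Rightarrow> nat \<Rightarrow> (nat \<Rightarrow> real) \<Rightarrow> nat \<Rightarrow> real" where
  "low_block_energy N m J k = (let a = digit N k; NN = real N in
     (\<Sum>i<m. J (i+1) * NN ^ i *
          ((NN - real (a i) - 1) * (\<Sum>j\<le>i. real (a j) * NN ^ j)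
           + real (a i) * (NN ^ i - (\<Sum>j<i. real (a j) * NN ^ j)))))"

lemma A3_ratio_eq_low_block_energy:
  "A3_ratio N n J h k =
     (low_block_energy N (m_hat N n J h) J k + real k * (\<Sum>i = m_hat N n J h + 1..n. J i * real N ^ i))
     / (of_int \<lceil>s_hat N n J h\<rceil> * (2 * s_hat N n J h - of_int \<lceil>s_hat N n J h\<rceil> + 1)
        * J (m_hat N n J h + 1) * real N ^ (2 * m_hat N n J h))"
  unfolding A3_ratio_def low_block_energy_def Let_def by simp

lemma low_block_energy_eq_block_cuts:
  assumes N: "N \<ge> 1"
  shows "low_block_energy N m J k = (\<Sum>i<m. J (i + 1) * (block_cut N (i + 1) k - block_cut N i k))"
  unfolding low_block_energy_def Let_def
proof (intro sum.cong refl)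
  fix i
  let ?a = "real (digit N k i)" and ?M = "real N ^ i"
  define r where "r = real (k mod N ^ i)"
  define R where "R = real (k mod N ^ (i + 1))"
  have r: "(\<Sum>j<i. real (digit N k j) * real N ^ j) = r"
    unfolding r_def using mod_power_eq_sum_digits[OF N] by simp
  have R: "(\<Sum>j\<le>i. real (digit N k j) * real N ^ j) = R"
    unfolding R_def using mod_power_eq_sum_digits[OF N, of k "i + 1"] by (simp add: lessThan_Suc_atMost)
  have "k mod N ^ (i + 1) = N ^ i * digit N k i + k mod N ^ i"
    unfolding digit_def using mod_mult2_eq[of k "N ^ i" N] by (simp add: mult.commute)
  then have R_eq: "R = ?a * ?M + r" unfolding R_def r_def by simp
  have cut: "block_cut N (i + 1) k = R * (real N * ?M - R)" "block_cut N i k = r * (?M - r)"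
    unfolding block_cut_def R_def r_def by (simp_all add: mult.commute)
  show "J (i + 1) * real N ^ i * ((real N - ?a - 1) * (\<Sum>j\<le>i. real (digit N k j) * real N ^ j)
           + ?a * (real N ^ i - (\<Sum>j<i. real (digit N k j) * real N ^ j)))
        = J (i + 1) * (block_cut N (i + 1) k - block_cut N i k)"
    unfolding r R cut R_eq by (simp add: algebra_simps)
qed

lemma low_block_energy_top:
  assumes "N \<ge> 1"
  shows "low_block_energy N m J (N ^ m) = 0"
proof -
  have "block_cut N i (N ^ m) = 0" if "i \<le> m" for i
    using that unfolding block_cut_def by (simp add: le_imp_power_dvd)
  then show ?thesis unfolding low_block_energy_eq_block_cuts[OF assms] by simp
qed

lemma sum_low_levels_segment:
  fixes J :: "nat \<Rightarrow> real"
  assumes N: "N \<ge> 1" and k: "k mod N ^ m = x mod N ^ m"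
  shows "(\<Sum>l = 1..m. J l * (block_cut N l x - block_cut N (l - 1) x)) = low_block_energy N m J k"
proof -
  have "(\<Sum>l = 1..m. J l * (block_cut N l x - block_cut N (l - 1) x))
      = (\<Sum>i<m. J (i + 1) * (block_cut N (i + 1) x - block_cut N i x))"
    using sum.atLeast1_atMost_eq[of "\<lambda>l. J l * (block_cut N l x - block_cut N (l - 1) x)" m] by simp
  also have "\<dots> = (\<Sum>i<m. J (i + 1) * (block_cut N (i + 1) k - block_cut N i k))"
    using block_cut_mod_eq[OF _ k] by (intro sum.cong refl) auto
  finally show ?thesis by (simp add: low_block_energy_eq_block_cuts[OF N])
qed

definition coupling_drop :: "nat \<Rightarrow> (nat \<Rightarrow> real) \<Rightarrow> nat \<Rightarrow> real" where
  "coupling_drop n J l = J l - (if l < n then J (l + 1) else 0)"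

lemma coupling_drop_nonneg:
  assumes "\<forall>i\<in>{1..n}. J i > 0" "\<forall>i j. 1 \<le> i \<longrightarrow> i \<le> j \<longrightarrow> j \<le> n \<longrightarrow> J j \<le> J i"
    and "l \<in> {1..n}"
  shows "coupling_drop n J l \<ge> 0"
proof (cases "l < n")
  case True
  then show ?thesis
    using assms(2)[rule_format, of l "l + 1"] assms(3) by (simp add: coupling_drop_def)
next
  case False
  then have "l = n" using assms(3) by simp
  then show ?thesis using assms(1,3) by (simp add: coupling_drop_def less_imp_le)
qed

lemma sum_levels_by_parts:
  fixes J c :: "nat \<Rightarrow> real"
  assumes "m + 1 \<le> n"
  shows "(\<Sum>l = m+1..n. J l * (c l - c (l - 1)))
       = (\<Sum>l = m+1..n. coupling_drop n J l * c l) - J (m + 1) * c m"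
proof -
  define Jt where "Jt l = (if l \<le> n then J l else 0)" for l
  have "(\<Sum>l = m+1..n. J l * (c l - c (l - 1))) = (\<Sum>l = m+1..n. Jt l * (c l - c (l - 1)))"
    by (intro sum.cong refl) (auto simp: Jt_def)
  also have "\<dots> = (\<Sum>l = m+1..n. (Jt l - Jt (l + 1)) * c l) + Jt (n + 1) * c n - Jt (m + 1) * c (m + 1 - 1)"
    by (rule sum_increments_by_parts) (use assms in auto)
  also have "(\<Sum>l = m+1..n. (Jt l - Jt (l + 1)) * c l) = (\<Sum>l = m+1..n. coupling_drop n J l * c l)"
    by (intro sum.cong refl) (auto simp: Jt_def coupling_drop_def)
  finally show ?thesis using assms by (simp add: Jt_def)
qed

lemma sum_coupling_drop:
  assumes "m + 1 \<le> n"
  shows "(\<Sum>l = m+1..n. coupling_drop n J l) = J (m + 1)"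
  using sum_levels_by_parts[OF assms, of J "\<lambda>_. 1"] by simp

lemma sum_coupling_drop_powers:
  assumes "m + 1 \<le> n" "N \<ge> 1"
  shows "(\<Sum>l = m+1..n. coupling_drop n J l * real N ^ l)
       = (1 - 1 / real N) * (\<Sum>i = m+1..n. J i * real N ^ i) + J (m + 1) * real N ^ m"
  using sum_levels_by_parts[OF assms(1), of J "\<lambda>l. real N ^ l"]
    sum_level_increments[of "real N" J m n] assms(2) by simp

lemma sum_coupling_drop_excess_le:
  fixes J :: "nat \<Rightarrow> real"
  assumes N: "N \<ge> 2" and m: "m + 1 \<le> n"
    and h: "(1 - 1 / real N) * (\<Sum>i = m+1..n. J i * real N ^ i) - h \<le> (1 - 1 / real N) * J (m + 1) * real N ^ (m + 1)"
  shows "(\<Sum>l = m+1..n. coupling_drop n J l * (real N ^ l - real N ^ (m + 1))) \<le> h"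
proof -
  have N1: "N \<ge> 1" using N by simp
  have "(\<Sum>l = m+1..n. coupling_drop n J l * (real N ^ l - real N ^ (m + 1)))
      = (\<Sum>l = m+1..n. coupling_drop n J l * real N ^ l) - (\<Sum>l = m+1..n. coupling_drop n J l) * real N ^ (m + 1)"
    by (simp add: right_diff_distrib sum_subtractf sum_distrib_right)
  also have "\<dots> = (1 - 1 / real N) * (\<Sum>i = m+1..n. J i * real N ^ i) - (1 - 1 / real N) * J (m + 1) * real N ^ (m + 1)"
    unfolding sum_coupling_drop_powers[OF m N1] sum_coupling_drop[OF m] using N by (simp add: field_simps)
  finally show ?thesis using h by linarith
qed

lemma quadratic_shift_le:
  fixes t s y K M :: real
  assumes "0 \<le> y" "0 \<le> t" "t \<le> s" "K \<le> M" "t = 0 \<or> K \<le> t"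
  shows "(t + y) * (M - (t + y)) - y * (M - y) \<le> s * (M - K)"
proof -
  have "(t + y) * (M - (t + y)) - y * (M - y) = t * (M - t - 2 * y)"
    by (simp add: algebra_simps)
  also have "\<dots> \<le> s * (M - K)"
  proof (cases "t = 0")
    case True
    then show ?thesis using assms by simp
  next
    case False
    then have "t * (M - t - 2 * y) \<le> t * (M - K)" using assms by (intro mult_left_mono) auto
    also have "\<dots> \<le> s * (M - K)" using assms by (intro mult_right_mono) auto
    finally show ?thesis .
  qed
  finally show ?thesis .
qed

lemma block_cut_le_remainder:
  fixes x :: nat
  assumes N: "N \<ge> 1" and l: "m + 1 \<le> l"
  defines "y \<equiv> x mod N ^ (m + 1)"
  shows "block_cut N l x \<le> block_cut N l y + (real x - real y) * (real N ^ l - real N ^ (m + 1))"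
proof -
  let ?K = "N ^ (m + 1)" and ?M = "N ^ l"
  define r where "r = x mod ?M"
  define q where "q = r div ?K"
  have KM: "?K \<le> ?M" using l N by (intro power_increasing) auto
  have "?K dvd ?M" using l by (intro le_imp_power_dvd) simp
  then have y_mod: "y = r mod ?K" unfolding y_def r_def by (simp add: mod_mod_cancel)
  have "y < ?K" unfolding y_def using N by simp
  then have cut_y: "block_cut N l y = real y * (real ?M - real y)"
    unfolding block_cut_def using KM by simp
  have cut_x: "block_cut N l x = real (?K * q + y) * (real ?M - real (?K * q + y))"
    unfolding block_cut_def r_def[symmetric] y_mod q_def by simp
  have "q \<le> x div ?K" unfolding q_def r_def by (simp add: div_le_mono)
  then have "?K * q \<le> ?K * (x div ?K)" by (rule mult_le_mono2)
  also have "\<dots> = x - y" unfolding y_def by (simp add: minus_mod_eq_mult_div)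
  finally have "real (?K * q) \<le> real (x - y)" by (simp only: of_nat_le_iff)
  then have "real (?K * q) \<le> real x - real y"
    unfolding y_def by (simp add: of_nat_diff mod_less_eq_dividend)
  moreover have "real (?K * q) = 0 \<or> real ?K \<le> real (?K * q)" by (cases q) simp_all
  moreover have "real ?K \<le> real ?M" using KM by (simp only: of_nat_le_iff)
  ultimately have "real (?K * q + y) * (real ?M - real (?K * q + y)) - real y * (real ?M - real y)
      \<le> (real x - real y) * (real ?M - real ?K)"
    using quadratic_shift_le[of "real y" "real (?K * q)" "real x - real y" "real ?K" "real ?M"]
    by (simp only: of_nat_add of_nat_0_le_iff)
  then show ?thesis unfolding cut_x cut_y by simp
qed

text \<open>Along the segment path only the position inside the current \<open>(m + 1)\<close>-block costs energy
  at the levels above \<open>m\<close>: completing whole \<open>(m + 1)\<close>-blocks is paid for by the field, which is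
  the content of the maximality of \<open>m_hat\<close> in the hypothesis on \<open>h\<close>.\<close>
lemma sum_high_levels_segment_le:
  fixes J :: "nat \<Rightarrow> real" and x :: nat
  assumes N: "N \<ge> 2" and J_pos: "\<forall>i\<in>{1..n}. J i > 0"
    and J_mono: "\<forall>i j. 1 \<le> i \<longrightarrow> i \<le> j \<longrightarrow> j \<le> n \<longrightarrow> J j \<le> J i" and m: "m + 1 \<le> n"
    and h: "(1 - 1 / real N) * (\<Sum>i = m+1..n. J i * real N ^ i) - h \<le> (1 - 1 / real N) * J (m + 1) * real N ^ (m + 1)"
  defines "y \<equiv> x mod N ^ (m + 1)"
  shows "(\<Sum>l = m+1..n. J l * (block_cut N l x - block_cut N (l - 1) x))
       \<le> real y * ((1 - 1 / real N) * (\<Sum>i = m+1..n. J i * real N ^ i) + J (m + 1) * real N ^ m)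
         - J (m + 1) * real y ^ 2 + (real x - real y) * h"
proof -
  let ?D = "coupling_drop n J" and ?t = "real x - real y"
  have N1: "N \<ge> 1" using N by simp
  have D_nonneg: "?D l \<ge> 0" if "l \<in> {m+1..n}" for l
    using coupling_drop_nonneg[OF J_pos J_mono] that by simp
  have cut_y: "block_cut N l y = real y * (real N ^ l - real y)" if "l \<in> {m+1..n}" for l
  proof -
    have "N ^ (m + 1) \<le> N ^ l" using that N1 by (intro power_increasing) auto
    moreover have "y < N ^ (m + 1)" unfolding y_def using N1 by simp
    ultimately show ?thesis unfolding block_cut_def by simp
  qed
  have field: "(\<Sum>l = m+1..n. ?D l * (real N ^ l - real N ^ (m + 1))) \<le> h"
    by (rule sum_coupling_drop_excess_le[OF N m h])
  have "(\<Sum>l = m+1..n. J l * (block_cut N l x - block_cut N (l - 1) x))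
      = (\<Sum>l = m+1..n. ?D l * block_cut N l x) - J (m + 1) * block_cut N m x"
    by (rule sum_levels_by_parts[OF m])
  also have "\<dots> \<le> (\<Sum>l = m+1..n. ?D l * block_cut N l x)"
    using J_pos m block_cut_nonneg[OF N1, of m x] by (simp add: less_imp_le)
  also have "\<dots> \<le> (\<Sum>l = m+1..n. ?D l * (real y * (real N ^ l - real y) + ?t * (real N ^ l - real N ^ (m + 1))))"
  proof (rule sum_mono)
    fix l assume l: "l \<in> {m+1..n}"
    have "block_cut N l x \<le> real y * (real N ^ l - real y) + ?t * (real N ^ l - real N ^ (m + 1))"
      using block_cut_le_remainder[OF N1, of m l x] cut_y[OF l] l unfolding y_def by simp
    then show "?D l * block_cut N l x \<le> ?D l * (real y * (real N ^ l - real y) + ?t * (real N ^ l - real N ^ (m + 1)))"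
      using D_nonneg[OF l] by (rule mult_left_mono)
  qed
  also have "\<dots> = real y * (\<Sum>l = m+1..n. ?D l * real N ^ l) - real y ^ 2 * (\<Sum>l = m+1..n. ?D l)
                 + ?t * (\<Sum>l = m+1..n. ?D l * (real N ^ l - real N ^ (m + 1)))"
    by (simp add: algebra_simps sum.distrib sum_distrib_left sum_subtractf power2_eq_square)
  also have "\<dots> \<le> real y * ((1 - 1 / real N) * (\<Sum>i = m+1..n. J i * real N ^ i) + J (m + 1) * real N ^ m)
                 - J (m + 1) * real y ^ 2 + ?t * h"
    using mult_left_mono[OF field, of ?t]
    unfolding sum_coupling_drop_powers[OF m N1] sum_coupling_drop[OF m] y_def
    by (simp add: mult.commute)
  finally show ?thesis .
qed

lemma mult_diff_le_square_div:
  fixes a b y :: real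
  assumes "a > 0"
  shows "y * (b - a * y) \<le> b ^ 2 / (4 * a)"
proof -
  have "4 * a * (y * (b - a * y)) = b ^ 2 - (b - 2 * a * y) ^ 2"
    by (simp add: algebra_simps power2_eq_square)
  also have "\<dots> \<le> b ^ 2" by simp
  finally show ?thesis using assms by (simp add: field_simps)
qed

lemma mult_diff_ge_square_div:
  fixes a b y :: real
  assumes "a > 0" "\<bar>y - b / (2 * a)\<bar> \<le> 1"
  shows "y * (b - a * y) \<ge> b ^ 2 / (4 * a) - a"
proof -
  have "y * (b - a * y) = b ^ 2 / (4 * a) - a * (y - b / (2 * a)) ^ 2"
    using assms(1) by (simp add: field_simps power2_eq_square)
  moreover have "(y - b / (2 * a)) ^ 2 \<le> 1"
    using power_le_one[OF abs_ge_zero assms(2), of 2] by simp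
  ultimately show ?thesis using assms(1) mult_left_mono[of _ 1 a] by force
qed

lemma exists_mod_representative:
  fixes M x :: nat
  assumes "M > 0"
  shows "\<exists>k \<in> {1..M}. k mod M = x mod M"
  using assms by (cases "x mod M = 0") (auto intro: bexI[of _ M] bexI[of _ "x mod M"] simp: less_imp_le)

lemma hamiltonian_segment_upper:
  fixes J :: "nat \<Rightarrow> real"
  assumes N: "N \<ge> 2" and J_pos: "\<forall>i\<in>{1..n}. J i > 0"
    and J_mono: "\<forall>i j. 1 \<le> i \<longrightarrow> i \<le> j \<longrightarrow> j \<le> n \<longrightarrow> J j \<le> J i" and m: "m + 1 \<le> n"
    and h: "(1 - 1 / real N) * (\<Sum>i = m+1..n. J i * real N ^ i) - h \<le> (1 - 1 / real N) * J (m + 1) * real N ^ (m + 1)"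
    and x: "x \<le> N ^ n"
  shows "\<exists>k \<in> {1..N ^ m}.
    hamiltonian N n J h (segment_config x) - hamiltonian N n J h all_minus \<le> low_block_energy N m J k
      + ((1 - 1 / real N) * (\<Sum>i = m+1..n. J i * real N ^ i) + J (m + 1) * real N ^ m - h) ^ 2 / (4 * J (m + 1))"
proof -
  let ?b = "(1 - 1 / real N) * (\<Sum>i = m+1..n. J i * real N ^ i) + J (m + 1) * real N ^ m - h"
  let ?y = "x mod N ^ (m + 1)"
  have N1: "N \<ge> 1" using N by simp
  obtain k where k: "k \<in> {1..N ^ m}" "k mod N ^ m = x mod N ^ m"
    using exists_mod_representative[of "N ^ m" x] N1 by auto
  have "hamiltonian N n J h (segment_config x) - hamiltonian N n J h all_minus
      = (\<Sum>l = 1..n. J l * (block_cut N l x - block_cut N (l - 1) x)) - h * real x"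
    by (rule hamiltonian_minus_ground_segment[OF N1 x])
  also have "\<dots> = (\<Sum>l = 1..m. J l * (block_cut N l x - block_cut N (l - 1) x))
        + (\<Sum>l = m+1..n. J l * (block_cut N l x - block_cut N (l - 1) x)) - h * real x"
    using sum_levels_split[of m n "\<lambda>l. J l * (block_cut N l x - block_cut N (l - 1) x)"] m by simp
  also have "\<dots> \<le> low_block_energy N m J k + real ?y * (?b - J (m + 1) * real ?y)"
    using sum_low_levels_segment[OF N1 k(2)] sum_high_levels_segment_le[OF N J_pos J_mono m h, of x]
    by (simp add: algebra_simps power2_eq_square)
  also have "real ?y * (?b - J (m + 1) * real ?y) \<le> ?b ^ 2 / (4 * J (m + 1))"
    using J_pos m by (intro mult_diff_le_square_div) auto
  finally show ?thesis using k(1) by auto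
qed

section \<open>Asymptotics\<close>

lemma finite_obtain_argmax:
  fixes f :: "'a \<Rightarrow> 'b :: linorder"
  assumes "finite A" "A \<noteq> {}"
  obtains k where "k \<in> A" "\<And>k'. k' \<in> A \<Longrightarrow> f k' \<le> f k"
proof -
  have fin: "finite (f ` A)" and ne: "f ` A \<noteq> {}" using assms by auto
  obtain k where "k \<in> A" "f k = Max (f ` A)" using Max_in[OF fin ne] by auto
  then show ?thesis using that Max_ge[OF fin] by auto
qed

lemma asymptotic_by_ratio_bounds:
  fixes G T r :: "nat \<Rightarrow> real" and R :: "nat \<Rightarrow> 'a \<Rightarrow> real" and K :: "nat \<Rightarrow> 'a set"
  assumes "r \<longlonglongrightarrow> 0"
    and "\<And>k. \<forall>N\<ge>N\<^sub>0. k N \<in> K N \<Longrightarrow> (\<lambda>N. R N (k N)) \<longlonglongrightarrow> 0"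
    and "\<And>N. N \<ge> N\<^sub>0 \<Longrightarrow> T N > 0 \<and> (\<exists>k \<in> K N. G N \<le> (1 + R N k) * T N) \<and>
           (r N < 1 \<longrightarrow> (1 - r N) / (1 + r N / 2) ^ 2 * T N \<le> G N)"
  shows "\<exists>e. e \<longlonglongrightarrow> 0 \<and> (\<forall>\<^sub>F N in sequentially. G N = (1 + e N) * T N)"
proof -
  obtain k where k: "\<forall>N\<ge>N\<^sub>0. k N \<in> K N \<and> G N \<le> (1 + R N (k N)) * T N"
    using assms(3) by metis
  define e where "e N = G N / T N - 1" for N
  have lower_lim: "(\<lambda>N. (1 - r N) / (1 + r N / 2) ^ 2 - 1) \<longlonglongrightarrow> (1 - 0) / (1 + 0 / 2) ^ 2 - 1"
    by (intro tendsto_intros assms(1)) auto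
  have "\<forall>\<^sub>F N in sequentially. r N < 1"
    using assms(1) by (rule order_tendstoD) simp
  with eventually_ge_at_top[of N\<^sub>0] have "\<forall>\<^sub>F N in sequentially. T N > 0 \<and>
      (1 - r N) / (1 + r N / 2) ^ 2 - 1 \<le> e N \<and> e N \<le> R N (k N)"
    by eventually_elim (use assms(3) k in \<open>auto simp: e_def field_simps\<close>)
  then have "\<forall>\<^sub>F N in sequentially. (1 - r N) / (1 + r N / 2) ^ 2 - 1 \<le> e N"
    and "\<forall>\<^sub>F N in sequentially. e N \<le> R N (k N)"
    and "\<forall>\<^sub>F N in sequentially. G N = (1 + e N) * T N"
    by (auto simp: e_def elim: eventually_mono)
  moreover have "(\<lambda>N. R N (k N)) \<longlonglongrightarrow> 0" using assms(2) k by blast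
  ultimately show ?thesis
    using tendsto_sandwich lower_lim by fastforce
qed

definition barrier_asymptote :: "nat \<Rightarrow> nat \<Rightarrow> (nat \<Rightarrow> real) \<Rightarrow> real \<Rightarrow> real" where
  "barrier_asymptote N n J h = (1/4) * inverse (J (m_hat N n J h + 1))
     * ((\<Sum>i = m_hat N n J h + 1..n. J i * real N ^ i) - h) ^ 2"

locale hierarchical_couplings =
  fixes N n :: nat and J :: "nat \<Rightarrow> real" and h :: real
  assumes N_ge_2: "N \<ge> 2" and n_ge_1: "n \<ge> 1" and h_pos: "h > 0"
    and J_pos: "\<forall>i\<in>{1..n}. J i > 0"
    and J_mono: "\<forall>i j. 1 \<le> i \<longrightarrow> i \<le> j \<longrightarrow> j \<le> n \<longrightarrow> J j \<le> J i"
    and A1: "(1 - 1 / real N) * (\<Sum>i = 1..n. J i * real N ^ i) > h"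
begin

abbreviation "m \<equiv> m_hat N n J h"
abbreviation "S \<equiv> \<Sum>i = m + 1..n. J i * real N ^ i"
abbreviation "Jc \<equiv> J (m + 1)"
text \<open>A configuration with \<open>p\<close> plus sites costs at least \<open>p (slope - Jc p)\<close>, whose maximum
  \<open>slope^2 / (4 Jc)\<close> falls short of \<open>target = (S - h)^2 / (4 Jc)\<close> only through \<open>tail_gap\<close>.\<close>
definition slope :: real where
  "slope = (1 - 1 / real N) * S + Jc * real N ^ m - h"

definition tail_gap :: real where
  "tail_gap = S / real N - Jc * real N ^ m"

abbreviation "target \<equiv> barrier_asymptote N n J h"

definition A3_denom :: real where
  "A3_denom = of_int \<lceil>s_hat N n J h\<rceil> * (2 * s_hat N n J h - of_int \<lceil>s_hat N n J h\<rceil> + 1)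
     * Jc * real N ^ (2 * m)"

lemma N_real: "real N \<ge> 2"
  using N_ge_2 by simp

lemma N_ge_1: "N \<ge> 1"
  using N_ge_2 by simp

lemma m_hat_spec: "m + 1 \<le> n" "(1 - 1 / real N) * S > h"
proof -
  define M where "M = {m. m \<le> n - 1 \<and> (1 - 1 / real N) * (\<Sum>i = m+1..n. J i * real N ^ i) > h}"
  have "finite M" "0 \<in> M" unfolding M_def using A1 by simp_all
  then have "Max M \<in> M" by (intro Max_in) auto
  then show "m + 1 \<le> n" "(1 - 1 / real N) * S > h"
    using n_ge_1 unfolding M_def m_hat_def by auto
qed

lemma Jc_pos: "Jc > 0"
  using J_pos m_hat_spec(1) by simp

lemma S_ge: "S \<ge> Jc * real N ^ (m + 1)"
proof -
  have "S = Jc * real N ^ (m + 1) + (\<Sum>i = m+2..n. J i * real N ^ i)"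
    using m_hat_spec(1) by (simp add: sum.atLeast_Suc_atMost)
  moreover have "(\<Sum>i = m+2..n. J i * real N ^ i) \<ge> 0"
    using J_pos by (intro sum_nonneg) (simp add: less_imp_le)
  ultimately show ?thesis by simp
qed

lemma m_hat_maximal: "(1 - 1 / real N) * S - h \<le> (1 - 1 / real N) * Jc * real N ^ (m + 1)"
proof (cases "m + 1 \<le> n - 1")
  case True
  define M where "M = {m. m \<le> n - 1 \<and> (1 - 1 / real N) * (\<Sum>i = m+1..n. J i * real N ^ i) > h}"
  have "m + 1 \<notin> M"
  proof
    assume "m + 1 \<in> M"
    moreover have "finite M" unfolding M_def by simp
    ultimately have "m + 1 \<le> Max M" by (rule Max_ge[rotated])
    then show False unfolding M_def m_hat_def by simp
  qed
  then have "(1 - 1 / real N) * (\<Sum>i = m+2..n. J i * real N ^ i) \<le> h"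
    using True unfolding M_def by auto
  moreover have "S = Jc * real N ^ (m + 1) + (\<Sum>i = m+2..n. J i * real N ^ i)"
    using m_hat_spec(1) by (simp add: sum.atLeast_Suc_atMost)
  ultimately show ?thesis by (simp add: algebra_simps)
next
  case False
  then have "n = m + 1" using m_hat_spec(1) by simp
  then show ?thesis using h_pos by simp
qed

lemma slope_pos: "slope > 0"
proof -
  have "Jc * real N ^ m > 0" using Jc_pos N_real by simp
  then show ?thesis using m_hat_spec(2) unfolding slope_def by linarith
qed

lemma tail_gap_nonneg: "tail_gap \<ge> 0"
  unfolding tail_gap_def using S_ge N_real by (simp add: field_simps)

lemma S_minus_h_eq: "S - h = slope + tail_gap"
  unfolding slope_def tail_gap_def using N_real by (simp add: field_simps)

lemma slope_le: "slope \<le> 2 * Jc * real N ^ (m + 1)"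
proof -
  have "slope \<le> (1 - 1 / real N) * Jc * real N ^ (m + 1) + Jc * real N ^ m"
    unfolding slope_def using m_hat_maximal by simp
  also have "(1 - 1 / real N) * Jc * real N ^ (m + 1) \<le> Jc * real N ^ (m + 1)"
    using Jc_pos N_real by (simp add: field_simps)
  also have "Jc * real N ^ m \<le> Jc * real N ^ (m + 1)"
    using Jc_pos N_real by (intro mult_left_mono) auto
  finally show ?thesis by (simp add: algebra_simps)
qed

lemma target_eq: "target = (slope + tail_gap) ^ 2 / (4 * Jc)"
  unfolding barrier_asymptote_def S_minus_h_eq[symmetric] by (simp add: field_simps)

lemma target_pos: "target > 0"
  unfolding target_eq using slope_pos tail_gap_nonneg Jc_pos by simp

text \<open>The lower bound comes from the level of \<open>\<lfloor>slope / (2 Jc)\<rfloor>\<close> plus sites, where the quadratic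
  lower bound on the energy is within \<open>Jc\<close> of its maximum.\<close>
lemma Gamma_star_lower: "Gamma_star N n J h \<ge> slope ^ 2 / (4 * Jc) - Jc"
proof -
  define z where "z = slope / (2 * Jc)"
  define x where "x = nat \<lfloor>z\<rfloor>"
  have z_pos: "z > 0" unfolding z_def using slope_pos Jc_pos by simp
  have x: "real x \<le> z" "z < real x + 1" unfolding x_def using z_pos by linarith+
  have "z \<le> real N ^ (m + 1)" unfolding z_def using slope_le Jc_pos by (simp add: field_simps)
  also have "\<dots> \<le> real N ^ n" using m_hat_spec(1) N_real by (intro power_increasing) auto
  finally have "real x \<le> real N ^ n" using x by linarith
  then have x_le: "x \<le> N ^ n" by (metis of_nat_le_iff of_nat_power)
  have quadratic: "real x * (slope - Jc * real x) \<ge> slope ^ 2 / (4 * Jc) - Jc"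
    using x Jc_pos unfolding z_def by (intro mult_diff_ge_square_div) auto
  show ?thesis
  proof (rule Gamma_star_ge_level[OF x_le])
    fix \<sigma> assume \<sigma>: "\<sigma> \<in> configs N n" "card (plus_sites N n \<sigma>) = x"
    then have "hamiltonian N n J h \<sigma> - hamiltonian N n J h all_minus \<ge> real x * (slope - Jc * real x)"
      using hamiltonian_minus_ground_lower[OF N_ge_2 J_mono m_hat_spec(1) \<sigma>(1), of h]
      unfolding slope_def by (simp add: algebra_simps)
    with quadratic show "hamiltonian N n J h \<sigma> - hamiltonian N n J h all_minus \<ge> slope ^ 2 / (4 * Jc) - Jc"
      by simp
  qed
qed

lemma s_hat_eq: "s_hat N n J h = ((1 - 1 / real N) * S - h) / (2 * Jc * real N ^ m)"
  unfolding s_hat_def Let_def using N_real by (simp add: field_simps)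

lemma s_hat_pos: "s_hat N n J h > 0"
  unfolding s_hat_eq using m_hat_spec(2) Jc_pos N_real by simp

lemma A3_denom_pos: "A3_denom > 0"
proof -
  let ?s = "s_hat N n J h"
  have "?s \<le> of_int \<lceil>?s\<rceil>" "of_int \<lceil>?s\<rceil> < ?s + 1" by linarith+
  then show ?thesis unfolding A3_denom_def using s_hat_pos Jc_pos N_real by (intro mult_pos_pos) auto
qed

text \<open>Since \<open>slope = 2 Jc N^m (s_hat + 1/2)\<close>, this is \<open>c (2 s - c + 1) \<le> (s + 1/2)^2\<close> for \<open>c = \<lceil>s\<rceil>\<close>.\<close>
lemma A3_denom_le: "A3_denom \<le> slope ^ 2 / (4 * Jc)"
proof -
  let ?s = "s_hat N n J h" and ?c = "of_int \<lceil>s_hat N n J h\<rceil> :: real"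
  have "(?s + 1/2) ^ 2 - ?c * (2 * ?s - ?c + 1) = (?c - (?s + 1/2)) ^ 2"
    by (simp add: algebra_simps power2_eq_square)
  then have "?c * (2 * ?s - ?c + 1) \<le> (?s + 1/2) ^ 2"
    by (metis diff_ge_0_iff_ge zero_le_power2)
  then have "A3_denom \<le> (?s + 1/2) ^ 2 * Jc * real N ^ (2 * m)"
    unfolding A3_denom_def using Jc_pos N_real by (intro mult_right_mono) auto
  also have "\<dots> = slope ^ 2 / (4 * Jc)"
  proof -
    have "(?s + 1/2) ^ 2 * Jc * real N ^ (2 * m) = (2 * Jc * real N ^ m * (?s + 1/2)) ^ 2 / (4 * Jc)"
      using Jc_pos by (simp add: power_even_eq field_simps power2_eq_square)
    also have "2 * Jc * real N ^ m * (?s + 1/2) = slope"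
      unfolding s_hat_eq slope_def using Jc_pos N_real by (simp add: field_simps)
    finally show ?thesis .
  qed
  finally show ?thesis .
qed

lemma A3_ratio_eq: "A3_ratio N n J h k = (low_block_energy N m J k + real k * S) / A3_denom"
  unfolding A3_denom_def by (rule A3_ratio_eq_low_block_energy)

lemma S_nonneg: "S \<ge> 0"
  by (rule order.trans[OF _ S_ge]) (use Jc_pos in simp)

text \<open>The ratio in (A3) at \<open>k = N^m\<close> controls both error terms: the gap between \<open>S - h\<close> and
  \<open>slope\<close>, and the rounding loss \<open>Jc\<close> of the lower bound.\<close>
lemma A3_ratio_top_bounds:
  defines "r \<equiv> A3_ratio N n J h (N ^ m)"
  shows "tail_gap \<le> r / 2 * slope" and "4 * Jc ^ 2 \<le> r * slope ^ 2"
proof -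
  have r_eq: "r = real N ^ m * S / A3_denom"
    unfolding r_def A3_ratio_eq low_block_energy_top[OF N_ge_1] by simp
  have r_nonneg: "r \<ge> 0" unfolding r_eq using S_nonneg A3_denom_pos by simp
  have "4 * Jc * A3_denom \<le> slope ^ 2" using A3_denom_le Jc_pos by (simp add: field_simps)
  then have "r * (4 * Jc * A3_denom) \<le> r * slope ^ 2" using r_nonneg by (rule mult_left_mono)
  moreover have "r * (4 * Jc * A3_denom) = 4 * Jc * (real N ^ m * S)"
    unfolding r_eq using A3_denom_pos by simp
  ultimately have r_ge: "4 * Jc * (real N ^ m * S) \<le> r * slope ^ 2" by linarith
  have "real N ^ (m + 1) * tail_gap \<le> real N ^ m * S"
    unfolding tail_gap_def using Jc_pos N_real by (simp add: field_simps)
  then have "4 * Jc * (real N ^ (m + 1) * tail_gap) \<le> 4 * Jc * (real N ^ m * S)"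
    using Jc_pos by (intro mult_left_mono) auto
  with r_ge have "4 * Jc * (real N ^ (m + 1) * tail_gap) \<le> r * slope ^ 2" by linarith
  moreover have "slope * tail_gap \<le> (2 * Jc * real N ^ (m + 1)) * tail_gap"
    using slope_le tail_gap_nonneg by (rule mult_right_mono)
  ultimately have "2 * tail_gap * slope \<le> r * slope ^ 2" by (simp add: algebra_simps)
  then show "tail_gap \<le> r / 2 * slope" using slope_pos by (simp add: power2_eq_square field_simps)
  have "Jc \<le> Jc * real N ^ (m + 1)"
    using Jc_pos N_real one_le_power[of "real N" "m + 1"] by simp
  also have "\<dots> \<le> S" by (rule S_ge)
  also have "S \<le> real N ^ m * S" using S_nonneg N_real by (simp add: mult_le_cancel_right1)
  finally have "4 * Jc * Jc \<le> 4 * Jc * (real N ^ m * S)" using Jc_pos by simp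
  with r_ge show "4 * Jc ^ 2 \<le> r * slope ^ 2" by (simp add: power2_eq_square)
qed

lemma Gamma_star_lower_ratio:
  defines "r \<equiv> A3_ratio N n J h (N ^ m)"
  assumes "r < 1"
  shows "(1 - r) / (1 + r / 2) ^ 2 * target \<le> Gamma_star N n J h"
proof -
  note bounds = A3_ratio_top_bounds[folded r_def]
  have "0 < r * slope ^ 2" using bounds(2) Jc_pos by (smt (verit) zero_less_power)
  then have r_pos: "r > 0" using slope_pos by (simp add: zero_less_mult_iff)
  have "(slope + tail_gap) ^ 2 \<le> ((1 + r / 2) * slope) ^ 2"
    using bounds(1) slope_pos tail_gap_nonneg by (intro power_mono) (auto simp: algebra_simps)
  then have "target \<le> (1 + r / 2) ^ 2 * slope ^ 2 / (4 * Jc)"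
    unfolding target_eq using Jc_pos by (simp add: divide_right_mono power_mult_distrib)
  then have "(1 - r) / (1 + r / 2) ^ 2 * target \<le> (1 - r) / (1 + r / 2) ^ 2 * ((1 + r / 2) ^ 2 * slope ^ 2 / (4 * Jc))"
    using assms(2) by (intro mult_left_mono) auto
  also have "\<dots> = (1 - r) * slope ^ 2 / (4 * Jc)"
    using r_pos Jc_pos by (simp add: field_simps)
  also have "\<dots> \<le> slope ^ 2 / (4 * Jc) - Jc"
    using bounds(2) Jc_pos by (simp add: field_simps power2_eq_square)
  also have "\<dots> \<le> Gamma_star N n J h" by (rule Gamma_star_lower)
  finally show ?thesis .
qed

lemma Gamma_star_le_low_block_max:
  assumes "\<And>k'. k' \<in> {1..N ^ m} \<Longrightarrow> low_block_energy N m J k' \<le> low_block_energy N m J k"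
  shows "Gamma_star N n J h \<le> slope ^ 2 / (4 * Jc) + low_block_energy N m J k"
proof (rule Gamma_star_le_segments)
  fix x assume "x \<le> N ^ n"
  from hamiltonian_segment_upper[OF N_ge_2 J_pos J_mono m_hat_spec(1) m_hat_maximal this]
  obtain k' where "k' \<in> {1..N ^ m}" and
    "hamiltonian N n J h (segment_config x) - hamiltonian N n J h all_minus
       \<le> low_block_energy N m J k' + slope ^ 2 / (4 * Jc)"
    unfolding slope_def by blast
  with assms show "hamiltonian N n J h (segment_config x) - hamiltonian N n J h all_minus
      \<le> slope ^ 2 / (4 * Jc) + low_block_energy N m J k"
    by fastforce
qed

lemma Gamma_star_upper: "\<exists>k \<in> {1..N ^ m}. Gamma_star N n J h \<le> (1 + A3_ratio N n J h k) * target"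
proof -
  let ?low = "low_block_energy N m J" and ?r = "A3_ratio N n J h"
  obtain k where k: "k \<in> {1..N ^ m}" and k_max: "\<And>k'. k' \<in> {1..N ^ m} \<Longrightarrow> ?low k' \<le> ?low k"
    using finite_obtain_argmax[of "{1..N ^ m}" ?low] N_ge_1 by auto
  have "?low k \<ge> 0"
    using k_max[of "N ^ m"] low_block_energy_top[OF N_ge_1] N_ge_1 by simp
  then have r_nonneg: "?r k \<ge> 0"
    unfolding A3_ratio_eq using A3_denom_pos S_nonneg by simp
  have "?low k \<le> ?r k * A3_denom"
    unfolding A3_ratio_eq using A3_denom_pos S_nonneg by simp
  also have "\<dots> \<le> ?r k * (slope ^ 2 / (4 * Jc))"
    using A3_denom_le r_nonneg by (rule mult_left_mono)
  finally have "?low k \<le> ?r k * (slope ^ 2 / (4 * Jc))" .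
  moreover have "Gamma_star N n J h \<le> slope ^ 2 / (4 * Jc) + ?low k"
    by (rule Gamma_star_le_low_block_max) (rule k_max)
  moreover have "(1 + ?r k) * (slope ^ 2 / (4 * Jc)) = slope ^ 2 / (4 * Jc) + ?r k * (slope ^ 2 / (4 * Jc))"
    by (simp only: distrib_right mult.left_neutral)
  ultimately have "Gamma_star N n J h \<le> (1 + ?r k) * (slope ^ 2 / (4 * Jc))" by linarith
  also have "\<dots> \<le> (1 + ?r k) * target"
  proof (rule mult_left_mono)
    have "slope ^ 2 \<le> (slope + tail_gap) ^ 2" using slope_pos tail_gap_nonneg by (intro power_mono) auto
    then show "slope ^ 2 / (4 * Jc) \<le> target" unfolding target_eq using Jc_pos by (simp add: divide_right_mono)
  qed (use r_nonneg in simp)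
  finally show ?thesis using k by blast
qed

end

theorem theorem1p9:
  fixes n :: nat and J :: "nat \<Rightarrow> nat \<Rightarrow> real" and h :: "nat \<Rightarrow> real"
  assumes n_pos: "n \<ge> 1"
    and h_pos: "\<forall>N\<ge>2. h N > 0"
    and J_pos: "\<forall>N\<ge>2. \<forall>i\<in>{1..n}. J N i > 0"
    and J_mono: "\<forall>N\<ge>2. \<forall>i j. 1 \<le> i \<longrightarrow> i \<le> j \<longrightarrow> j \<le> n \<longrightarrow> J N j \<le> J N i"
    and A1: "\<forall>N\<ge>2. (1 - 1 / real N) * (\<Sum>i = 1..n. J N i * real N ^ i) > h N"
    and A3: "\<forall>k :: nat \<Rightarrow> nat. (\<forall>N\<ge>2. 1 \<le> k N \<and> k N \<le> N ^ m_hat N n (J N) (h N)) \<longrightarrow>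
               (\<lambda>N. A3_ratio N n (J N) (h N) (k N)) \<longlonglongrightarrow> 0"
  shows "\<exists>e :: nat \<Rightarrow> real. e \<longlonglongrightarrow> 0 \<and>
           (\<forall>\<^sub>F N in sequentially.
              Gamma_star N n (J N) (h N) =
                (1 + e N) * (1/4) * inverse (J N (m_hat N n (J N) (h N) + 1)) *
                  ((\<Sum>i = m_hat N n (J N) (h N) + 1..n. J N i * real N ^ i) - h N) ^ 2)"
proof -
  have model: "hierarchical_couplings N n (J N) (h N)" if "N \<ge> 2" for N
    using that assms by unfold_locales auto
  have "\<exists>e. e \<longlonglongrightarrow> 0 \<and>
      (\<forall>\<^sub>F N in sequentially. Gamma_star N n (J N) (h N) = (1 + e N) * barrier_asymptote N n (J N) (h N))"
  proof (rule asymptotic_by_ratio_bounds[where N\<^sub>0 = 2 and K = "\<lambda>N. {1..N ^ m_hat N n (J N) (h N)}"])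
    show "(\<lambda>N. A3_ratio N n (J N) (h N) (N ^ m_hat N n (J N) (h N))) \<longlonglongrightarrow> 0"
      using A3 by simp
    show "(\<lambda>N. A3_ratio N n (J N) (h N) (k N)) \<longlonglongrightarrow> 0" if "\<forall>N\<ge>2. k N \<in> {1..N ^ m_hat N n (J N) (h N)}" for k
      using A3 that by simp
  qed (use hierarchical_couplings.target_pos hierarchical_couplings.Gamma_star_upper
         hierarchical_couplings.Gamma_star_lower_ratio model in blast)
  then show ?thesis by (simp add: barrier_asymptote_def mult.assoc)
qed

end
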